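(* Let $\Omega\subseteq\mathbb{R}^n$ be a bounded open set with smooth boundary, $\varepsilon>0$, $g\in C^{0,1}_{\mathrm{loc}}(\mathbb{R}^n)\cap L^\infty(\mathbb{R}^n)$, $f\in L^\infty(\Omega)$, and let $v_\varepsilon\in H^s_g(\Omega)\cap L^p(\Omega)$ be a weak solution of $(-\Delta)^sv_\varepsilon+\varepsilon^{-2s}W'(v_\varepsilon)=f$ in $\Omega$. Then $$\|v_\varepsilon\|_{L^\infty(\mathbb{R}^n)}\le\max\Big((1+c_W\varepsilon^{2s}\|f\|_{L^\infty(\Omega)})^{\frac{1}{p-1}},\ \|g\|_{L^\infty(\mathbb{R}^n\setminus\Omega)}\Big).$$
   Context: $n\ge2$, $s\in(0,1/2)$. $W$ satisfies: $W\in C^2(\mathbb{R};[0,\infty))$; $\{W=0\}=\{\pm1\}$, $W''(\pm1)>0$; there exist $p\in(1,\infty)$ and $c_W>0$ with $c_W^{-1}(|t|^{p-1}-1)\le|W'(t)|\le c_W(|t|^{p-1}+1)$ for all $t\in\mathbb{R}$ ($p$, $c_W$ are these constants). $\gamma_{n,s}:=s2^{2s}\pi^{-n/2}\Gamma(\frac{n+2s}{2})/\Gamma(1-s)$; $\mathcal{E}(v,\Omega):=\frac{\gamma_{n,s}}{4}\iint_{\Omega\times\Omega}\frac{|v(x)-v(y)|^2}{|x-y|^{n+2s}}+\frac{\gamma_{n,s}}{2}\iint_{\Omega\times\Omega^c}\frac{|v(x)-v(y)|^2}{|x-y|^{n+2s}}$; $\widehat H^s(\Omega)=\{v\in L^2_{\mathrm{loc}}:\mathcal{E}(v,\Omega)<\infty\}$;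 $H^s_{00}(\Omega)=\{v\in H^s(\mathbb{R}^n):v=0$ a.e. outside $\Omega\}$; $H^s_g(\Omega)=\{v\in\widehat H^s(\Omega):v=g$ a.e. outside $\Omega\}$. $\langle(-\Delta)^sv,\varphi\rangle_\Omega=\frac{\gamma_{n,s}}{2}\iint_{\Omega\times\Omega}\frac{(v(x)-v(y))(\varphi(x)-\varphi(y))}{|x-y|^{n+2s}}+\gamma_{n,s}\iint_{\Omega\times\Omega^c}\frac{(v(x)-v(y))(\varphi(x)-\varphi(y))}{|x-y|^{n+2s}}$. Weak solution: $\langle(-\Delta)^sv,\varphi\rangle_\Omega+\varepsilon^{-2s}\int_\Omega W'(v)\varphi=\int_\Omega f\varphi$ for all $\varphi\in H^s_{00}(\Omega)\cap L^p(\Omega)$. *)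

theory Defs
  imports "HOL-Analysis.Analysis" "HOL-Probability.Essential_Supremum"
begin

fun iter_dderiv :: "'a::euclidean_space list \<Rightarrow> ('a \<Rightarrow> real) \<Rightarrow> 'a \<Rightarrow> real" where
  "iter_dderiv [] f = f"
| "iter_dderiv (d # ds) f = (\<lambda>x. frechet_derivative (iter_dderiv ds f) (at x) d)"

definition smooth_on :: "'a::euclidean_space set \<Rightarrow> ('a \<Rightarrow> real) \<Rightarrow> bool" where
  "smooth_on U f \<longleftrightarrow> (\<forall>ds. iter_dderiv ds f differentiable_on U \<and> continuous_on U (iter_dderiv ds f))"

definition smooth_boundary :: "'a::euclidean_space set \<Rightarrow> bool" where
  "smooth_boundary \<Omega> \<longleftrightarrow>
     (\<forall>x0\<in>frontier \<Omega>. \<exists>U \<rho>. open U \<and> x0 \<in> U \<and> smooth_on U \<rho> \<and>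
        \<Omega> \<inter> U = {x\<in>U. \<rho> x < 0} \<and> frechet_derivative \<rho> (at x0) \<noteq> (\<lambda>_. 0))"

definition gamma_ns :: "nat \<Rightarrow> real \<Rightarrow> real" where
  "gamma_ns n s = s * 2 powr (2 * s) * pi powr (- real n / 2) * Gamma ((real n + 2 * s) / 2) / Gamma (1 - s)"

definition frac_kernel :: "real \<Rightarrow> 'a::euclidean_space \<Rightarrow> 'a \<Rightarrow> real" where
  "frac_kernel s x y = 1 / norm (x - y) powr (real DIM('a) + 2 * s)"

definition gag :: "real \<Rightarrow> ('a::euclidean_space \<times> 'a) set \<Rightarrow> ('a \<Rightarrow> real) \<Rightarrow> ennreal" where
  "gag s A v = (\<integral>\<^sup>+ z. indicator A z * ennreal ((v (fst z) - v (snd z))\<^sup>2 * frac_kernel s (fst z) (snd z))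
                  \<partial>(lebesgue \<Otimes>\<^sub>M lebesgue))"

definition frac_energy :: "real \<Rightarrow> 'a::euclidean_space set \<Rightarrow> ('a \<Rightarrow> real) \<Rightarrow> ennreal" where
  "frac_energy s \<Omega> v =
     ennreal (gamma_ns DIM('a) s / 4) * gag s (\<Omega> \<times> \<Omega>) v
   + ennreal (gamma_ns DIM('a) s / 2) * gag s (\<Omega> \<times> (- \<Omega>)) v"

definition L2loc :: "('a::euclidean_space \<Rightarrow> real) set" where
  "L2loc = {v. v \<in> borel_measurable lebesgue \<and>
      (\<forall>K. compact K \<longrightarrow> (\<integral>\<^sup>+ x. indicator K x * ennreal ((v x)\<^sup>2) \<partial>lebesgue) < \<infinity>)}"

definition Hhat :: "real \<Rightarrow> 'a::euclidean_space set \<Rightarrow> ('a \<Rightarrow> real) set" where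
  "Hhat s \<Omega> = {v. v \<in> L2loc \<and> frac_energy s \<Omega> v < \<infinity>}"

definition Hs :: "real \<Rightarrow> ('a::euclidean_space \<Rightarrow> real) set" where
  "Hs s = {v. v \<in> borel_measurable lebesgue \<and>
      (\<integral>\<^sup>+ x. ennreal ((v x)\<^sup>2) \<partial>lebesgue) < \<infinity> \<and> gag s UNIV v < \<infinity>}"

definition H00 :: "real \<Rightarrow> 'a::euclidean_space set \<Rightarrow> ('a \<Rightarrow> real) set" where
  "H00 s \<Omega> = {v. v \<in> Hs s \<and> (AE x in lebesgue. x \<notin> \<Omega> \<longrightarrow> v x = 0)}"

definition Hg :: "real \<Rightarrow> 'a::euclidean_space set \<Rightarrow> ('a \<Rightarrow> real) \<Rightarrow> ('a \<Rightarrow> real) set" where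
  "Hg s \<Omega> g = {v. v \<in> Hhat s \<Omega> \<and> (AE x in lebesgue. x \<notin> \<Omega> \<longrightarrow> v x = g x)}"

definition Lp_on :: "'a::euclidean_space set \<Rightarrow> real \<Rightarrow> ('a \<Rightarrow> real) set" where
  "Lp_on \<Omega> p = {v. set_borel_measurable lebesgue \<Omega> v \<and>
      (\<integral>\<^sup>+ x. indicator \<Omega> x * ennreal (\<bar>v x\<bar> powr p) \<partial>lebesgue) < \<infinity>}"

definition frac_form :: "real \<Rightarrow> 'a::euclidean_space set \<Rightarrow> ('a \<Rightarrow> real) \<Rightarrow> ('a \<Rightarrow> real) \<Rightarrow> real" where
  "frac_form s \<Omega> v \<phi> =
     gamma_ns DIM('a) s / 2 * (\<integral> z. indicator (\<Omega> \<times> \<Omega>) z *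
        ((v (fst z) - v (snd z)) * (\<phi> (fst z) - \<phi> (snd z)) * frac_kernel s (fst z) (snd z))
        \<partial>(lebesgue \<Otimes>\<^sub>M lebesgue))
   + gamma_ns DIM('a) s * (\<integral> z. indicator (\<Omega> \<times> (- \<Omega>)) z *
        ((v (fst z) - v (snd z)) * (\<phi> (fst z) - \<phi> (snd z)) * frac_kernel s (fst z) (snd z))
        \<partial>(lebesgue \<Otimes>\<^sub>M lebesgue))"

text \<open>Weak solution of (-Delta)^s v + eps^(-2s) W'(v) = f in \<Omega> (W' passed as Wd).\<close>
definition weak_solution ::
  "real \<Rightarrow> real \<Rightarrow> real \<Rightarrow> (real \<Rightarrow> real) \<Rightarrow> 'a::euclidean_space set \<Rightarrow> ('a \<Rightarrow> real) \<Rightarrow> ('a \<Rightarrow> real) \<Rightarrow> bool" where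
  "weak_solution s p \<epsilon> Wd \<Omega> f v \<longleftrightarrow>
     (\<forall>\<phi> \<in> H00 s \<Omega> \<inter> Lp_on \<Omega> p.
        frac_form s \<Omega> v \<phi> + \<epsilon> powr (- 2 * s) * (\<integral> x. indicator \<Omega> x * (Wd (v x) * \<phi> x) \<partial>lebesgue)
        = (\<integral> x. indicator \<Omega> x * (f x * \<phi> x) \<partial>lebesgue))"

text \<open>L-infinity norm on a set A (as an extended real; infinite if not essentially bounded).\<close>
definition Linf_on :: "'a::euclidean_space set \<Rightarrow> ('a \<Rightarrow> real) \<Rightarrow> ereal" where
  "Linf_on A u = esssup (restrict_space lebesgue A) (\<lambda>x. ereal \<bar>u x\<bar>)"

end

theory Submission
  imports Defs
begin

text \<open>Test the equation with \<open>\<phi> = (v - k)\<^sup>+\<close>, and symmetrically with \<open>-(-v - k)\<^sup>+\<close>,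
  where \<open>k\<close> is the claimed bound. Truncation is monotone and 1-Lipschitz, so \<open>\<phi>\<close> is an
  admissible test function (it vanishes outside \<open>\<Omega>\<close> because \<open>|g| \<le> k\<close> there) and the nonlocal
  form \<open>\<langle>(-\<Delta>)\<^sup>s v, \<phi>\<rangle>\<close> is nonnegative. Hence \<open>\<epsilon>\<^sup>-\<^sup>2\<^sup>s \<integral> W'(v) \<phi> \<le> \<integral> f \<phi> \<le> \<parallel>f\<parallel>\<^sub>\<infinity> \<integral> |\<phi>|\<close>.
  On the other hand, where \<open>|v| > k\<close> the lower growth bound on \<open>W'\<close> together with the choice
  of \<open>k\<close> gives \<open>\<epsilon>\<^sup>-\<^sup>2\<^sup>s |W'(v)| > \<parallel>f\<parallel>\<^sub>\<infinity>\<close>, and \<open>W'(v)\<close> has the sign of \<open>v\<close>; so \<open>\<phi> = 0\<close> almost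
  everywhere.\<close>

lemma gamma_ns_pos: "0 < s \<Longrightarrow> s < 1 \<Longrightarrow> gamma_ns n s > 0"
  unfolding gamma_ns_def by (intro divide_pos_pos mult_pos_pos Gamma_real_pos) auto

lemma sigma_finite_measure_lebesgue: "sigma_finite_measure (lebesgue :: 'a::euclidean_space measure)"
proof
  let ?A = "range (\<lambda>n::nat. cball (0::'a) (real n))"
  show "\<exists>A. countable A \<and> A \<subseteq> sets (lebesgue::'a measure) \<and> \<Union> A = space lebesgue \<and>
      (\<forall>a\<in>A. emeasure lebesgue a \<noteq> \<infinity>)"
  proof (intro exI[of _ ?A] conjI)
    show "\<Union> ?A = space lebesgue"
      by (auto simp: dist_norm) (metis real_arch_simple)
    show "\<forall>a\<in>?A. emeasure lebesgue a \<noteq> \<infinity>"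
    proof
      fix a assume "a \<in> ?A"
      then have "a \<in> lmeasurable" by auto
      then show "emeasure lebesgue a \<noteq> \<infinity>"
        unfolding fmeasurable_def mem_Collect_eq by (metis less_imp_neq)
    qed
  qed auto
qed

lemma AE_pair_lebesgue_fst_snd:
  assumes "AE x in (lebesgue::'a::euclidean_space measure). P x"
  shows "AE z in lebesgue \<Otimes>\<^sub>M lebesgue. P (fst z) \<and> P (snd z)"
proof -
  interpret sigma_finite_measure "lebesgue::'a measure" by (rule sigma_finite_measure_lebesgue)
  obtain N where N: "{x. \<not> P x} \<subseteq> N" "N \<in> null_sets lebesgue"
    using assms by (auto elim: AE_E simp: null_sets_def)
  have "N \<times> UNIV \<union> UNIV \<times> N \<in> null_sets ((lebesgue::'a measure) \<Otimes>\<^sub>M (lebesgue::'a measure))"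
    using times_in_null_sets1[OF N(2) sets.top]
      times_in_null_sets2[OF sets.top[of lebesgue] N(2)] by auto
  then show ?thesis
    by (rule AE_I') (use N in \<open>auto simp: space_pair_measure\<close>)
qed

lemma borel_measurable_frac_kernel [measurable]:
  "(\<lambda>z. frac_kernel s (fst z) (snd z)) \<in> borel_measurable ((lebesgue::'a::euclidean_space measure) \<Otimes>\<^sub>M lebesgue)"
proof -
  have id: "(\<lambda>x. x) \<in> borel_measurable (lebesgue::'a measure)"
    by (rule measurable_completion) simp
  have [measurable]: "(\<lambda>z. fst z) \<in> borel_measurable ((lebesgue::'a measure) \<Otimes>\<^sub>M (lebesgue::'a measure))"
    by (rule measurable_compose[OF measurable_fst id])
  have [measurable]: "(\<lambda>z. snd z) \<in> borel_measurable ((lebesgue::'a measure) \<Otimes>\<^sub>M (lebesgue::'a measure))"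
    by (rule measurable_compose[OF measurable_snd id])
  show ?thesis unfolding frac_kernel_def by measurable
qed

text \<open>\<open>Linf_on A u\<close> is \<open>-\<infinity>\<close> on null sets and \<open>\<infinity>\<close> for unbounded \<open>u\<close>; \<open>real_of_ereal\<close> sends both to \<open>0\<close>.\<close>
lemma real_of_Linf_on_nonneg: "0 \<le> real_of_ereal (Linf_on A u)"
proof (cases "(\<lambda>x. ereal \<bar>u x\<bar>) \<in> borel_measurable (restrict_space lebesgue A)")
  case meas: True
  let ?M = "restrict_space lebesgue A"
  show ?thesis
  proof (cases "emeasure ?M (space ?M) = 0")
    case True
    then show ?thesis by (simp add: Linf_on_def esssup_zero_space[OF True meas])
  next
    case False
    have "0 = esssup ?M (\<lambda>x. 0 :: ereal)" using esssup_const[OF False] by simp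
    also have "\<dots> \<le> Linf_on A u" unfolding Linf_on_def by (rule esssup_mono) auto
    finally show ?thesis by (simp add: real_of_ereal_pos)
  qed
qed (simp add: Linf_on_def esssup_non_measurable top_ereal_def)

lemma AE_abs_le_Linf_on:
  assumes "A \<in> sets lebesgue" "Linf_on A u < \<infinity>"
  shows "AE x in lebesgue. x \<in> A \<longrightarrow> \<bar>u x\<bar> \<le> real_of_ereal (Linf_on A u)"
proof -
  have "AE x in restrict_space lebesgue A. ereal \<bar>u x\<bar> \<le> Linf_on A u"
    unfolding Linf_on_def by (rule esssup_AE)
  then have "AE x in lebesgue. x \<in> A \<longrightarrow> ereal \<bar>u x\<bar> \<le> Linf_on A u"
    using assms(1) by (simp add: AE_restrict_space_iff)
  then show ?thesis
    by eventually_elim (insert assms(2), cases "Linf_on A u", auto)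
qed

lemma Linf_on_le:
  assumes "(\<lambda>x. ereal \<bar>u x\<bar>) \<in> borel_measurable lebesgue" "A \<in> sets lebesgue"
    and "AE x in lebesgue. x \<in> A \<longrightarrow> \<bar>u x\<bar> \<le> c"
  shows "Linf_on A u \<le> ereal c"
  unfolding Linf_on_def
proof (rule esssup_I)
  show "(\<lambda>x. ereal \<bar>u x\<bar>) \<in> borel_measurable (restrict_space lebesgue A)"
    using assms(1) by (rule measurable_restrict_space1)
  show "AE x in restrict_space lebesgue A. ereal \<bar>u x\<bar> \<le> ereal c"
    using assms(2,3) by (simp add: AE_restrict_space_iff)
qed

lemma Linf_on_finite_subset:
  assumes "Linf_on UNIV u < \<infinity>" "A \<in> sets lebesgue"
  shows "Linf_on A u < \<infinity>"
proof -
  have "(\<lambda>x. ereal \<bar>u x\<bar>) \<in> borel_measurable (restrict_space lebesgue UNIV)"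
    using assms(1) esssup_non_measurable[of "\<lambda>x. ereal \<bar>u x\<bar>" "restrict_space lebesgue UNIV"]
    by (auto simp: Linf_on_def top_ereal_def)
  then have "(\<lambda>x. ereal \<bar>u x\<bar>) \<in> borel_measurable lebesgue"
    by (simp add: measurable_cong_sets[OF sets_restrict_UNIV refl])
  then have "Linf_on A u \<le> ereal (real_of_ereal (Linf_on UNIV u))"
    using AE_abs_le_Linf_on[OF _ assms(1)] assms(2) by (intro Linf_on_le) auto
  then show ?thesis
    using less_le_trans by fastforce
qed

lemma gag_finite_of_Hhat:
  assumes "0 < s" "s < 1" "v \<in> Hhat s \<Omega>"
  shows "gag s (\<Omega> \<times> \<Omega>) v < \<infinity>" "gag s (\<Omega> \<times> - \<Omega>) v < \<infinity>"
proof -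
  have "ennreal (gamma_ns DIM('a) s / 4) * gag s (\<Omega> \<times> \<Omega>) v < \<infinity>"
       "ennreal (gamma_ns DIM('a) s / 2) * gag s (\<Omega> \<times> - \<Omega>) v < \<infinity>"
    using assms(3) by (simp_all add: Hhat_def frac_energy_def less_top ennreal_add_eq_top)
  then show "gag s (\<Omega> \<times> \<Omega>) v < \<infinity>" "gag s (\<Omega> \<times> - \<Omega>) v < \<infinity>"
    using gamma_ns_pos[OF assms(1,2), of "DIM('a)"] by (auto simp: ennreal_mult_less_top)
qed

lemma gag_swap:
  fixes A B :: "'a::euclidean_space set"
  assumes [measurable]: "A \<in> sets lebesgue" "B \<in> sets lebesgue" "v \<in> borel_measurable lebesgue"
  shows "gag s (B \<times> A) v = gag s (A \<times> B) v"
proof -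
  interpret pair_sigma_finite "lebesgue::'a measure" "lebesgue::'a measure"
    by (simp add: pair_sigma_finite_def sigma_finite_measure_lebesgue)
  let ?P = "(lebesgue::'a measure) \<Otimes>\<^sub>M lebesgue" and ?swap = "\<lambda>(x::'a, y). (y, x)"
  let ?I = "\<lambda>C z. indicator C z * ennreal ((v (fst z) - v (snd z))\<^sup>2 * frac_kernel s (fst z) (snd z))"
  have "gag s (B \<times> A) v = integral\<^sup>N (distr ?P ?P ?swap) (?I (B \<times> A))"
    unfolding gag_def distr_pair_swap[symmetric] ..
  also have "\<dots> = (\<integral>\<^sup>+ z. ?I (B \<times> A) (?swap z) \<partial>?P)"
    by (rule nn_integral_distr) measurable
  also have "\<dots> = gag s (A \<times> B) v"
    unfolding gag_def
    by (intro nn_integral_cong)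
       (auto simp: indicator_def frac_kernel_def norm_minus_commute power2_commute split: prod.splits)
  finally show ?thesis .
qed

lemma gag_le_of_vanishing_outside:
  fixes v \<phi> :: "'a::euclidean_space \<Rightarrow> real"
  assumes [measurable]: "\<Omega> \<in> sets lebesgue" "v \<in> borel_measurable lebesgue"
    and diff: "\<And>x y. (\<phi> x - \<phi> y)\<^sup>2 \<le> (v x - v y)\<^sup>2"
    and vanish: "AE x in lebesgue. x \<notin> \<Omega> \<longrightarrow> \<phi> x = 0"
  shows "gag s UNIV \<phi> \<le> gag s (\<Omega> \<times> \<Omega>) v + 2 * gag s (\<Omega> \<times> - \<Omega>) v"
proof -
  let ?P = "(lebesgue::'a measure) \<Otimes>\<^sub>M lebesgue"
  let ?I = "\<lambda>C z. indicator C z * ennreal ((v (fst z) - v (snd z))\<^sup>2 * frac_kernel s (fst z) (snd z))"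
  have [measurable]: "- \<Omega> \<in> sets lebesgue"
    using assms(1) by (simp add: Compl_eq_Diff_UNIV sets.Diff)
  have [measurable]: "C \<times> D \<in> sets ?P" if "C \<in> sets lebesgue" "D \<in> sets lebesgue" for C D
    using that by (rule pair_measureI)
  have [measurable]: "(\<lambda>z. (v (fst z) - v (snd z))\<^sup>2 * frac_kernel s (fst z) (snd z)) \<in> borel_measurable ?P"
    by measurable
  have "gag s UNIV \<phi> \<le> (\<integral>\<^sup>+ z. ?I (\<Omega> \<times> \<Omega>) z + ?I (\<Omega> \<times> - \<Omega>) z + ?I ((- \<Omega>) \<times> \<Omega>) z \<partial>?P)"
    unfolding gag_def using AE_pair_lebesgue_fst_snd[OF vanish]
  proof (intro nn_integral_mono_AE, eventually_elim)
    case (elim z)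
    have "(\<phi> (fst z) - \<phi> (snd z))\<^sup>2 * frac_kernel s (fst z) (snd z)
        \<le> (v (fst z) - v (snd z))\<^sup>2 * frac_kernel s (fst z) (snd z)"
      by (intro mult_right_mono diff) (simp add: frac_kernel_def)
    with elim show ?case
      by (cases "fst z \<in> \<Omega>"; cases "snd z \<in> \<Omega>") (auto simp: indicator_def mem_Times_iff ennreal_leI)
  qed
  also have "\<dots> = gag s (\<Omega> \<times> \<Omega>) v + gag s (\<Omega> \<times> - \<Omega>) v + gag s ((- \<Omega>) \<times> \<Omega>) v"
    unfolding gag_def by (simp add: nn_integral_add)
  also have "\<dots> = gag s (\<Omega> \<times> \<Omega>) v + 2 * gag s (\<Omega> \<times> - \<Omega>) v"
    by (simp add: gag_swap mult_2)
  finally show ?thesis .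
qed

lemma lipschitz_comp_in_H00:
  fixes v :: "'a::euclidean_space \<Rightarrow> real" and T :: "real \<Rightarrow> real"
  assumes s: "0 < s" "s < 1" and \<Omega>: "bounded \<Omega>" "open \<Omega>" and v: "v \<in> Hhat s \<Omega>"
    and T: "1-lipschitz_on UNIV T" "\<And>t. \<bar>T t\<bar> \<le> \<bar>t\<bar>"
    and vanish: "AE x in lebesgue. x \<notin> \<Omega> \<longrightarrow> T (v x) = 0"
  shows "(\<lambda>x. T (v x)) \<in> H00 s \<Omega>"
proof -
  have [measurable]: "\<Omega> \<in> sets lebesgue" "v \<in> borel_measurable lebesgue"
    using \<Omega> v by (auto simp: Hhat_def L2loc_def fmeasurable_def intro: lmeasurable_open)
  have [measurable]: "T \<in> borel_measurable borel"
    using lipschitz_on_continuous_on[OF T(1)] by (rule borel_measurable_continuous_onI)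
  have "(\<integral>\<^sup>+ x. ennreal ((T (v x))\<^sup>2) \<partial>lebesgue)
      \<le> (\<integral>\<^sup>+ x. indicator (closure \<Omega>) x * ennreal ((v x)\<^sup>2) \<partial>lebesgue)"
    using vanish
  proof (intro nn_integral_mono_AE, eventually_elim)
    case (elim x)
    have "(T (v x))\<^sup>2 \<le> (v x)\<^sup>2"
      using T(2)[of "v x"] by (simp add: abs_le_square_iff)
    with elim closure_subset[of \<Omega>] show ?case
      by (cases "x \<in> \<Omega>") (auto simp: indicator_def ennreal_leI)
  qed
  also have "\<dots> < \<infinity>"
    using v compact_closure[of \<Omega>] \<Omega>(1) by (simp add: Hhat_def L2loc_def)
  finally have L2: "(\<integral>\<^sup>+ x. ennreal ((T (v x))\<^sup>2) \<partial>lebesgue) < \<infinity>" .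
  have "(T (v x) - T (v y))\<^sup>2 \<le> (v x - v y)\<^sup>2" for x y
    using lipschitz_onD[OF T(1), of "v x" "v y"] by (simp add: dist_real_def abs_le_square_iff)
  then have "gag s UNIV (\<lambda>x. T (v x)) \<le> gag s (\<Omega> \<times> \<Omega>) v + 2 * gag s (\<Omega> \<times> - \<Omega>) v"
    by (intro gag_le_of_vanishing_outside vanish) measurable
  also have "\<dots> < \<infinity>"
    using gag_finite_of_Hhat[OF s v] by (simp add: ennreal_mult_less_top ennreal_add_less_top)
  finally show ?thesis
    unfolding H00_def Hs_def using L2 vanish by simp
qed

lemma Lp_on_dominated:
  assumes "v \<in> Lp_on \<Omega> p" "\<Omega> \<in> sets lebesgue" "u \<in> borel_measurable lebesgue"
    and "\<And>x. \<bar>u x\<bar> \<le> \<bar>v x\<bar>" "0 \<le> p"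
  shows "u \<in> Lp_on \<Omega> p"
proof -
  have "(\<integral>\<^sup>+ x. indicator \<Omega> x * ennreal (\<bar>u x\<bar> powr p) \<partial>lebesgue)
      \<le> (\<integral>\<^sup>+ x. indicator \<Omega> x * ennreal (\<bar>v x\<bar> powr p) \<partial>lebesgue)"
    using assms(4,5) by (intro nn_integral_mono mult_left_mono ennreal_leI powr_mono2) auto
  also have "\<dots> < \<infinity>" using assms(1) by (simp add: Lp_on_def)
  finally show ?thesis
    using assms(2,3) by (simp add: Lp_on_def set_borel_measurable_def)
qed

lemma frac_form_nonneg:
  assumes "0 < s" "s < 1" "\<And>x y. 0 \<le> (v x - v y) * (\<phi> x - \<phi> y)"
  shows "0 \<le> frac_form s \<Omega> v \<phi>"
proof -
  have "0 \<le> indicator A z * ((v (fst z) - v (snd z)) * (\<phi> (fst z) - \<phi> (snd z)) * frac_kernel s (fst z) (snd z))"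
    for A z using assms(3) by (simp add: frac_kernel_def)
  moreover have "0 \<le> gamma_ns DIM('a) s"
    using gamma_ns_pos[OF assms(1,2)] by (rule less_imp_le)
  ultimately show ?thesis
    unfolding frac_form_def by (intro add_nonneg_nonneg mult_nonneg_nonneg integral_nonneg) auto
qed

lemma integrable_powr_of_Lp_on:
  assumes "v \<in> Lp_on \<Omega> p" "\<Omega> \<in> sets lebesgue" "v \<in> borel_measurable lebesgue"
  shows "integrable lebesgue (\<lambda>x. indicator \<Omega> x * \<bar>v x\<bar> powr p)"
proof (rule integrableI_nonneg)
  have "(\<integral>\<^sup>+ x. ennreal (indicator \<Omega> x * \<bar>v x\<bar> powr p) \<partial>lebesgue)
      = (\<integral>\<^sup>+ x. indicator \<Omega> x * ennreal (\<bar>v x\<bar> powr p) \<partial>lebesgue)"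
    by (intro nn_integral_cong) (simp add: indicator_def)
  then show "(\<integral>\<^sup>+ x. ennreal (indicator \<Omega> x * \<bar>v x\<bar> powr p) \<partial>lebesgue) < \<infinity>"
    using assms(1) by (simp add: Lp_on_def)
qed (use assms(2,3) in auto)

lemma derivative_pos_right_of_zero:
  fixes W Wd :: "real \<Rightarrow> real"
  assumes der: "\<And>t. (W has_real_derivative Wd t) (at t)"
    and cont: "continuous_on UNIV Wd"
    and nonneg: "\<And>t. W t \<ge> 0" and zero: "W a = 0"
    and nz: "\<And>t. t > a \<Longrightarrow> Wd t \<noteq> 0"
    and t: "t > a"
  shows "Wd t > 0"
proof (rule ccontr)
  assume "\<not> Wd t > 0"
  with nz[OF t] have neg: "Wd t < 0" by linarith
  obtain \<xi> where \<xi>: "a < \<xi>" "\<xi> < t" "W t - W a = (t - a) * Wd \<xi>"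
    using MVT2[of a t W Wd] t der by auto
  have "(t - a) * Wd \<xi> \<ge> 0" using \<xi>(3) nonneg[of t] zero by simp
  with t nz[OF \<xi>(1)] have pos: "Wd \<xi> > 0" by (simp add: zero_le_mult_iff)
  obtain c where "\<xi> \<le> c" "c \<le> t" "Wd c = 0"
    using IVT2[of Wd t 0 \<xi>] neg pos \<xi>(2) cont by (auto simp: continuous_on_eq_continuous_at)
  with nz[of c] \<xi>(1) show False by auto
qed

lemma double_well_derivative_sign:
  fixes W Wd :: "real \<Rightarrow> real"
  assumes der: "\<And>t. (W has_real_derivative Wd t) (at t)"
    and cont: "continuous_on UNIV Wd"
    and nonneg: "\<And>t. W t \<ge> 0" and zeros: "W 1 = 0" "W (-1) = 0"
    and nz: "\<And>t. \<bar>t\<bar> > 1 \<Longrightarrow> Wd t \<noteq> 0"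
  shows "t > 1 \<Longrightarrow> Wd t > 0" and "t < -1 \<Longrightarrow> Wd t < 0"
proof -
  show "t > 1 \<Longrightarrow> Wd t > 0"
    by (rule derivative_pos_right_of_zero[OF der cont nonneg zeros(1)]) (use nz in auto)
  have "((\<lambda>t. W (- t)) has_real_derivative - Wd (- t)) (at t)" for t
    using DERIV_chain2[OF der DERIV_minus[OF DERIV_ident]] by simp
  moreover have "continuous_on UNIV (\<lambda>t. - Wd (- t))"
    by (intro continuous_intros continuous_on_compose2[OF cont]) auto
  ultimately have "t > 1 \<Longrightarrow> - Wd (- t) > 0" for t
    by (rule derivative_pos_right_of_zero[where W = "\<lambda>t. W (- t)"]) (use nonneg zeros nz in auto)
  then show "t < -1 \<Longrightarrow> Wd t < 0"
    by (metis minus_less_iff minus_minus neg_0_less_iff_less)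
qed

lemma one_le_threshold:
  fixes cW \<epsilon> s p F :: real
  assumes "cW > 0" "\<epsilon> > 0" "p > 1" "0 \<le> F"
  shows "1 \<le> (1 + cW * \<epsilon> powr (2 * s) * F) powr (1 / (p - 1))"
  using assms by (intro ge_one_powr_ge_zero) auto

lemma reaction_exceeds_source:
  fixes cW \<epsilon> s p F k t w :: real
  assumes cW: "cW > 0" and eps: "\<epsilon> > 0" and p: "p > 1" and F: "0 \<le> F"
    and k: "(1 + cW * \<epsilon> powr (2 * s) * F) powr (1 / (p - 1)) \<le> k"
    and t: "\<bar>t\<bar> > k"
    and growth: "(\<bar>t\<bar> powr (p - 1) - 1) / cW \<le> w"
  shows "F < \<epsilon> powr (- 2 * s) * w"
proof -
  define B where "B = 1 + cW * \<epsilon> powr (2 * s) * F"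
  have B: "1 \<le> B" using cW F unfolding B_def by simp
  have k1: "1 \<le> k" using one_le_threshold[OF cW eps p F, of s] k by simp
  have "B = (B powr (1 / (p - 1))) powr (p - 1)" using p B by (simp add: powr_powr)
  also have "\<dots> \<le> k powr (p - 1)"
    using k p B unfolding B_def[symmetric] by (intro powr_mono2) auto
  also have "\<dots> < \<bar>t\<bar> powr (p - 1)"
    using t k1 p by (intro powr_less_mono2) auto
  also have "\<dots> \<le> 1 + cW * w"
    using growth cW by (simp add: field_simps)
  finally have "\<epsilon> powr (2 * s) * F < w"
    using cW unfolding B_def by (simp add: mult.assoc)
  then show ?thesis
    using eps by (simp add: powr_minus field_simps)
qed

text \<open>The sign \<open>\<sigma> = \<plusminus>1\<close> handles both truncations at once:
  \<open>excess 1 k t = (t - k)\<^sup>+\<close> and \<open>excess (-1) k t = -(-t - k)\<^sup>+\<close>.\<close>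
definition excess :: "real \<Rightarrow> real \<Rightarrow> real \<Rightarrow> real" where
  "excess \<sigma> k t = \<sigma> * max 0 (\<sigma> * t - k)"

context
  fixes \<sigma> :: real
  assumes sign: "\<sigma> = 1 \<or> \<sigma> = -1"
begin

lemma abs_excess: "\<bar>excess \<sigma> k t\<bar> = max 0 (\<sigma> * t - k)"
  using sign by (auto simp: excess_def)

lemma excess_eq_0_iff: "excess \<sigma> k t = 0 \<longleftrightarrow> \<sigma> * t \<le> k"
  using sign by (auto simp: excess_def)

lemma abs_excess_le: "0 \<le> k \<Longrightarrow> \<bar>excess \<sigma> k t\<bar> \<le> \<bar>t\<bar>"
  using sign by (auto simp: abs_excess)

lemma excess_lipschitz: "1-lipschitz_on UNIV (excess \<sigma> k)"
  by (rule lipschitz_onI) (use sign in \<open>auto simp: excess_def dist_real_def\<close>)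

lemma excess_monotone: "0 \<le> (a - b) * (excess \<sigma> k a - excess \<sigma> k b)"
  using sign by (auto simp: excess_def max_def mult_le_0_iff zero_le_mult_iff)

lemma abs_excess_le_powr:
  assumes "1 \<le> k" "1 \<le> p"
  shows "\<bar>excess \<sigma> k t\<bar> \<le> \<bar>t\<bar> powr p"
proof (cases "\<sigma> * t \<le> k")
  case False
  then have "1 \<le> \<bar>t\<bar>" using sign assms(1) by auto
  then have "\<bar>t\<bar> \<le> \<bar>t\<bar> powr p" using assms(2) powr_mono[of 1 p "\<bar>t\<bar>"] by simp
  then show ?thesis using abs_excess_le assms(1) by (meson order_trans zero_le_one)
qed (use sign in \<open>simp add: abs_excess\<close>)

lemma abs_reaction_times_excess_le:
  assumes "1 \<le> k" "1 < p" "0 < cW"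
    and growth: "\<bar>Wd t\<bar> \<le> cW * (\<bar>t\<bar> powr (p - 1) + 1)"
  shows "\<bar>Wd t * excess \<sigma> k t\<bar> \<le> 2 * cW * \<bar>t\<bar> powr p"
proof (cases "\<sigma> * t \<le> k")
  case False
  then have t1: "1 \<le> \<bar>t\<bar>" using sign assms(1) by auto
  have "\<bar>Wd t * excess \<sigma> k t\<bar> \<le> cW * (\<bar>t\<bar> powr (p - 1) + 1) * \<bar>t\<bar>"
    unfolding abs_mult using abs_excess_le assms(1,3)
    by (intro mult_mono growth) auto
  also have "\<dots> = cW * (\<bar>t\<bar> powr p + \<bar>t\<bar>)"
    using t1 by (simp add: algebra_simps powr_diff)
  also have "\<dots> \<le> cW * (\<bar>t\<bar> powr p + \<bar>t\<bar> powr p)"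
    using t1 assms(2,3) powr_mono[of 1 p "\<bar>t\<bar>"] by simp
  finally show ?thesis by simp
qed (use excess_eq_0_iff[of k t] assms(3) in simp)


lemma source_le_reaction_times_excess:
  fixes cW \<epsilon> s p F k t :: real
  assumes cW: "cW > 0" and eps: "\<epsilon> > 0" and p: "p > 1" and F: "0 \<le> F"
    and k: "(1 + cW * \<epsilon> powr (2 * s) * F) powr (1 / (p - 1)) \<le> k"
    and Wd_sign: "\<sigma> * t > 1 \<Longrightarrow> \<sigma> * Wd t > 0"
    and growth: "(\<bar>t\<bar> powr (p - 1) - 1) / cW \<le> \<bar>Wd t\<bar>"
  shows "F * \<bar>excess \<sigma> k t\<bar> \<le> \<epsilon> powr (- 2 * s) * (Wd t * excess \<sigma> k t)"
    and "excess \<sigma> k t \<noteq> 0 \<Longrightarrow> F * \<bar>excess \<sigma> k t\<bar> < \<epsilon> powr (- 2 * s) * (Wd t * excess \<sigma> k t)"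
proof -
  have k1: "1 \<le> k" using one_le_threshold[OF cW eps p F, of s] k by simp
  show strict: "F * \<bar>excess \<sigma> k t\<bar> < \<epsilon> powr (- 2 * s) * (Wd t * excess \<sigma> k t)"
    if "excess \<sigma> k t \<noteq> 0"
  proof -
    have "\<sigma> * t > k" using that excess_eq_0_iff by simp
    then have "\<sigma> * Wd t > 0" "\<bar>t\<bar> > k" using Wd_sign k1 sign by auto
    then have "Wd t * excess \<sigma> k t = \<bar>Wd t\<bar> * \<bar>excess \<sigma> k t\<bar>"
      using sign by (auto simp: excess_def abs_mult)
    moreover have "F < \<epsilon> powr (- 2 * s) * \<bar>Wd t\<bar>"
      using reaction_exceeds_source[OF cW eps p F k \<open>\<bar>t\<bar> > k\<close> growth] .
    ultimately show ?thesis
      using that by (simp add: mult.assoc[symmetric])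
  qed
  show "F * \<bar>excess \<sigma> k t\<bar> \<le> \<epsilon> powr (- 2 * s) * (Wd t * excess \<sigma> k t)"
    using strict by (cases "excess \<sigma> k t = 0") force+
qed
end

lemma weak_solution_reaction_le_source:
  fixes \<Omega> :: "'n::euclidean_space set" and v f \<phi> :: "'n \<Rightarrow> real"
  assumes sol: "weak_solution s p \<epsilon> Wd \<Omega> f v"
    and \<phi>: "\<phi> \<in> H00 s \<Omega> \<inter> Lp_on \<Omega> p" "0 \<le> frac_form s \<Omega> v \<phi>"
    and \<phi>_int: "integrable lebesgue (\<lambda>x. indicator \<Omega> x * \<bar>\<phi> x\<bar>)"
    and f: "AE x in lebesgue. x \<in> \<Omega> \<longrightarrow> \<bar>f x\<bar> \<le> F" and F: "0 \<le> F"
  shows "\<epsilon> powr (- 2 * s) * (\<integral> x. indicator \<Omega> x * (Wd (v x) * \<phi> x) \<partial>lebesgue)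
    \<le> F * (\<integral> x. indicator \<Omega> x * \<bar>\<phi> x\<bar> \<partial>lebesgue)"
proof -
  have "(\<integral> x. indicator \<Omega> x * (f x * \<phi> x) \<partial>lebesgue) \<le> (\<integral> x. F * (indicator \<Omega> x * \<bar>\<phi> x\<bar>) \<partial>lebesgue)"
  proof (rule integral_mono_AE')
    show "AE x in lebesgue. indicator \<Omega> x * (f x * \<phi> x) \<le> F * (indicator \<Omega> x * \<bar>\<phi> x\<bar>)"
      using f
    proof eventually_elim
      case (elim x)
      have "f x * \<phi> x \<le> \<bar>f x\<bar> * \<bar>\<phi> x\<bar>"
        by (metis abs_ge_self abs_mult)
      also have "\<dots> \<le> F * \<bar>\<phi> x\<bar>" if "x \<in> \<Omega>"
        using elim that by (intro mult_right_mono) auto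
      finally show ?case by (simp add: indicator_def)
    qed
  qed (use \<phi>_int F in auto)
  moreover have "frac_form s \<Omega> v \<phi> + \<epsilon> powr (- 2 * s) * (\<integral> x. indicator \<Omega> x * (Wd (v x) * \<phi> x) \<partial>lebesgue)
      = (\<integral> x. indicator \<Omega> x * (f x * \<phi> x) \<partial>lebesgue)"
    using sol \<phi>(1) unfolding weak_solution_def by blast
  ultimately show ?thesis
    using \<phi>(2) by simp
qed

lemma AE_eq_of_integral_le_of_le:
  fixes a b :: "'a \<Rightarrow> real"
  assumes "integrable M a" "integrable M b" "integral\<^sup>L M a \<le> integral\<^sup>L M b"
    and "\<And>x. x \<in> space M \<Longrightarrow> b x \<le> a x"
  shows "AE x in M. a x = b x"
proof -
  have "integral\<^sup>L M (\<lambda>x. a x - b x) = 0"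
    using assms integral_mono[OF assms(2,1)] by simp
  then have "AE x in M. a x - b x = 0"
    using assms by (subst (asm) integral_nonneg_eq_0_iff_AE) auto
  then show ?thesis by simp
qed

lemma excess_admissible:
  fixes \<Omega> :: "'n::euclidean_space set" and v :: "'n \<Rightarrow> real"
  assumes s: "0 < s" "s < 1" and p: "0 \<le> p" and \<Omega>: "bounded \<Omega>" "open \<Omega>"
    and v: "v \<in> Hhat s \<Omega>" "v \<in> Lp_on \<Omega> p"
    and \<sigma>: "\<sigma> = 1 \<or> \<sigma> = -1" and k: "0 \<le> k"
    and outside: "AE x in lebesgue. x \<notin> \<Omega> \<longrightarrow> \<bar>v x\<bar> \<le> k"
  shows "(\<lambda>x. excess \<sigma> k (v x)) \<in> H00 s \<Omega> \<inter> Lp_on \<Omega> p"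
    and "0 \<le> frac_form s \<Omega> v (\<lambda>x. excess \<sigma> k (v x))"
proof -
  have [measurable]: "\<Omega> \<in> sets lebesgue" "v \<in> borel_measurable lebesgue"
    using \<Omega> v by (auto simp: Hhat_def L2loc_def fmeasurable_def intro: lmeasurable_open)
  have [measurable]: "excess \<sigma> k \<in> borel_measurable borel"
    using lipschitz_on_continuous_on[OF excess_lipschitz[OF \<sigma>]] by (rule borel_measurable_continuous_onI)
  have "AE x in lebesgue. x \<notin> \<Omega> \<longrightarrow> excess \<sigma> k (v x) = 0"
    using outside by eventually_elim (use \<sigma> in \<open>auto simp: excess_eq_0_iff[OF \<sigma>]\<close>)
  then have "(\<lambda>x. excess \<sigma> k (v x)) \<in> H00 s \<Omega>"
    using k by (intro lipschitz_comp_in_H00[OF s \<Omega> v(1) excess_lipschitz[OF \<sigma>]] abs_excess_le[OF \<sigma>])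
  moreover have "(\<lambda>x. excess \<sigma> k (v x)) \<in> Lp_on \<Omega> p"
    using k p by (intro Lp_on_dominated[OF v(2)] abs_excess_le[OF \<sigma>]) auto
  ultimately show "(\<lambda>x. excess \<sigma> k (v x)) \<in> H00 s \<Omega> \<inter> Lp_on \<Omega> p" by simp
  show "0 \<le> frac_form s \<Omega> v (\<lambda>x. excess \<sigma> k (v x))"
    by (intro frac_form_nonneg[OF s] excess_monotone[OF \<sigma>])
qed

lemma weak_solution_one_sided_bound:
  fixes \<Omega> :: "'n::euclidean_space set" and v f :: "'n \<Rightarrow> real" and Wd :: "real \<Rightarrow> real"
  assumes s: "0 < s" "s < 1" and p: "p > 1" and cW: "cW > 0" and eps: "\<epsilon> > 0"
    and \<sigma>: "\<sigma> = 1 \<or> \<sigma> = -1"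
    and Wd_sign: "\<And>t. \<sigma> * t > 1 \<Longrightarrow> \<sigma> * Wd t > 0" and Wd_cont: "continuous_on UNIV Wd"
    and growth: "\<And>t. (\<bar>t\<bar> powr (p - 1) - 1) / cW \<le> \<bar>Wd t\<bar>"
                "\<And>t. \<bar>Wd t\<bar> \<le> cW * (\<bar>t\<bar> powr (p - 1) + 1)"
    and \<Omega>: "bounded \<Omega>" "open \<Omega>"
    and v: "v \<in> Hhat s \<Omega>" "v \<in> Lp_on \<Omega> p" and sol: "weak_solution s p \<epsilon> Wd \<Omega> f v"
    and f: "AE x in lebesgue. x \<in> \<Omega> \<longrightarrow> \<bar>f x\<bar> \<le> F" and F: "0 \<le> F"
    and outside: "AE x in lebesgue. x \<notin> \<Omega> \<longrightarrow> \<bar>v x\<bar> \<le> k"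
    and k: "(1 + cW * \<epsilon> powr (2 * s) * F) powr (1 / (p - 1)) \<le> k"
  shows "AE x in lebesgue. \<sigma> * v x \<le> k"
proof -
  have k1: "1 \<le> k" using one_le_threshold[OF cW eps p F, of s] k by simp
  have [measurable]: "\<Omega> \<in> sets lebesgue" "v \<in> borel_measurable lebesgue"
    using \<Omega> v by (auto simp: Hhat_def L2loc_def fmeasurable_def intro: lmeasurable_open)
  have [measurable]: "Wd \<in> borel_measurable borel"
    using Wd_cont by (rule borel_measurable_continuous_onI)
  have [measurable]: "excess \<sigma> k \<in> borel_measurable borel"
    using lipschitz_on_continuous_on[OF excess_lipschitz[OF \<sigma>]] by (rule borel_measurable_continuous_onI)
  define \<phi> where "\<phi> x = excess \<sigma> k (v x)" for x
  have v_powr: "integrable lebesgue (\<lambda>x. indicator \<Omega> x * \<bar>v x\<bar> powr p)"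
    using v(2) by (rule integrable_powr_of_Lp_on) measurable
  have \<phi>_int: "integrable lebesgue (\<lambda>x. indicator \<Omega> x * \<bar>\<phi> x\<bar>)"
    using v_powr by (rule Bochner_Integration.integrable_bound)
      (use k1 p in \<open>auto simp: \<phi>_def indicator_def intro!: abs_excess_le_powr[OF \<sigma>]\<close>)
  have reaction_int: "integrable lebesgue (\<lambda>x. indicator \<Omega> x * (Wd (v x) * \<phi> x))"
    using integrable_mult_right[OF v_powr, of "2 * cW"]
    by (rule Bochner_Integration.integrable_bound)
      (use k1 p cW growth(2) in \<open>auto simp: \<phi>_def indicator_def intro!: abs_reaction_times_excess_le[OF \<sigma>]\<close>)
  have "\<epsilon> powr (- 2 * s) * (\<integral> x. indicator \<Omega> x * (Wd (v x) * \<phi> x) \<partial>lebesgue)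
      \<le> F * (\<integral> x. indicator \<Omega> x * \<bar>\<phi> x\<bar> \<partial>lebesgue)"
    unfolding \<phi>_def using excess_admissible[OF s _ \<Omega> v \<sigma> _ outside] k1 p \<phi>_int[unfolded \<phi>_def]
    by (intro weak_solution_reaction_le_source[OF sol _ _ _ f F]) auto
  moreover have pointwise:
      "F * \<bar>\<phi> x\<bar> \<le> \<epsilon> powr (- 2 * s) * (Wd (v x) * \<phi> x)"
      "\<phi> x \<noteq> 0 \<Longrightarrow> F * \<bar>\<phi> x\<bar> < \<epsilon> powr (- 2 * s) * (Wd (v x) * \<phi> x)" for x
    unfolding \<phi>_def using source_le_reaction_times_excess[where Wd = Wd and t = "v x", OF \<sigma> cW eps p F k Wd_sign growth(1)]
    by simp_all
  ultimately have "AE x in lebesgue. \<epsilon> powr (- 2 * s) * (indicator \<Omega> x * (Wd (v x) * \<phi> x))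
      = F * (indicator \<Omega> x * \<bar>\<phi> x\<bar>)"
    using reaction_int \<phi>_int by (intro AE_eq_of_integral_le_of_le) (auto simp: indicator_def)
  then show ?thesis
    using outside
  proof eventually_elim
    case (elim x)
    then show ?case
      using pointwise(2)[of x] excess_eq_0_iff[OF \<sigma>, of k "v x"] \<sigma>
      by (cases "x \<in> \<Omega>") (auto simp: \<phi>_def)
  qed
qed

theorem corollary3p10:
  fixes \<Omega> :: "'n::euclidean_space set"
    and W Wd Wdd :: "real \<Rightarrow> real"
    and s p cW \<epsilon> :: real
    and g f v :: "'n \<Rightarrow> real"
  assumes n2: "DIM('n) \<ge> 2"
    and s: "0 < s" "s < 1/2"
    and W_C2: "\<And>t. (W has_real_derivative Wd t) (at t)"
              "\<And>t. (Wd has_real_derivative Wdd t) (at t)"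
              "continuous_on UNIV Wdd"
    and W_nonneg: "\<And>t. W t \<ge> 0"
    and W_zeros: "{t. W t = 0} = {-1, 1}"
    and W_nondeg: "Wdd 1 > 0" "Wdd (-1) > 0"
    and p: "p > 1" and cW: "cW > 0"
    and W_growth: "\<And>t. (\<bar>t\<bar> powr (p - 1) - 1) / cW \<le> \<bar>Wd t\<bar>"
                  "\<And>t. \<bar>Wd t\<bar> \<le> cW * (\<bar>t\<bar> powr (p - 1) + 1)"
    and \<Omega>: "bounded \<Omega>" "open \<Omega>" "smooth_boundary \<Omega>"
    and eps: "\<epsilon> > 0"
    and g_lip: "\<forall>x. \<exists>r>0. \<exists>L. L-lipschitz_on (ball x r) g"
    and g_Linf: "Linf_on UNIV g < \<infinity>"
    and f_Linf: "Linf_on \<Omega> f < \<infinity>"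
    and v_space: "v \<in> Hg s \<Omega> g" "v \<in> Lp_on \<Omega> p"
    and v_sol: "weak_solution s p \<epsilon> Wd \<Omega> f v"
  shows "Linf_on UNIV v \<le>
    ereal (max ((1 + cW * \<epsilon> powr (2 * s) * real_of_ereal (Linf_on \<Omega> f)) powr (1 / (p - 1)))
               (real_of_ereal (Linf_on (- \<Omega>) g)))"
proof -
  define F where "F = real_of_ereal (Linf_on \<Omega> f)"
  define k where "k = max ((1 + cW * \<epsilon> powr (2 * s) * F) powr (1 / (p - 1))) (real_of_ereal (Linf_on (- \<Omega>) g))"
  have Wd_cont: "continuous_on UNIV Wd"
    using W_C2(2) by (intro continuous_at_imp_continuous_on) (auto intro: DERIV_isCont)
  have "Wd t \<noteq> 0" if "\<bar>t\<bar> > 1" for t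
  proof -
    have "1 < \<bar>t\<bar> powr (p - 1)" using that p by (intro gr_one_powr) auto
    then show ?thesis using W_growth(1)[of t] cW by (auto simp: field_simps)
  qed
  moreover have "W 1 = 0" "W (-1) = 0"
    using W_zeros by (auto simp: set_eq_iff)
  ultimately have Wd_sign: "\<sigma> * Wd t > 0" if "\<sigma> = 1 \<or> \<sigma> = -1" "\<sigma> * t > 1" for \<sigma> t
    using double_well_derivative_sign[OF W_C2(1) Wd_cont W_nonneg] that by auto
  have [measurable]: "\<Omega> \<in> sets lebesgue" "- \<Omega> \<in> sets lebesgue" "v \<in> borel_measurable lebesgue"
    using \<Omega> v_space by (auto simp: fmeasurable_def Hg_def Hhat_def L2loc_def intro: lmeasurable_open)
  have outside: "AE x in lebesgue. x \<notin> \<Omega> \<longrightarrow> \<bar>v x\<bar> \<le> k"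
    using AE_abs_le_Linf_on[of "- \<Omega>" g] Linf_on_finite_subset[OF g_Linf] v_space(1)
    by (auto simp: Hg_def k_def elim!: eventually_mono[OF eventually_conj])
  have s1: "s < 1" using s(2) by simp
  have bound: "AE x in lebesgue. \<sigma> * v x \<le> k" if "\<sigma> = 1 \<or> \<sigma> = -1" for \<sigma>
    using v_space v_sol AE_abs_le_Linf_on[OF _ f_Linf] real_of_Linf_on_nonneg outside
    by (intro weak_solution_one_sided_bound[OF s(1) s1 p cW eps that Wd_sign[OF that] Wd_cont W_growth \<Omega>(1,2)])
       (auto simp: Hg_def F_def k_def)
  have "AE x in lebesgue. v x \<le> k" "AE x in lebesgue. - v x \<le> k"
    using bound[of 1] bound[of "-1"] by simp_all
  then have "AE x in lebesgue. \<bar>v x\<bar> \<le> k"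
    by eventually_elim auto
  then show ?thesis
    unfolding k_def F_def by (intro Linf_on_le) auto
qed

end
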